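(* Let $a>1$ and $C_j(n,a)=\binom{n}{j}\left(\frac{1+a}{2}\right)^{n-j}\left(\frac{1-a}{2}\right)^j$. Then for every $z\in\mathbb{C}$, $$\lim_{n\to\infty}\sum_{j=0}^nC_j(n,a)\,e^{\frac{iz}{\sqrt2}(1-2j/n)-\frac14(1-2j/n)^2}=e^{\frac{iza}{\sqrt2}-\frac{a^2}{4}},$$ equivalently $\lim_{n\to\infty}\sum_{j=0}^nC_j(n,a)k_{b_j}(z)=k_{-ia/\sqrt2}(z)$ where $b_j=-\frac{i}{\sqrt2}(1-\frac{2j}{n})$.
   Context: For $w\in\mathbb{C}$, $k_w(z)=e^{z\overline{w}-|w|^2/2}$ denotes the normalized reproducing kernel of the Fock space. *)

theory Defs
  imports "HOL-Analysis.Analysis"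
begin

definition fock_kernel :: "complex \<Rightarrow> complex \<Rightarrow> complex" where
  "fock_kernel w z = exp (z * cnj w - of_real ((cmod w)^2 / 2))"

definition Ccoef :: "nat \<Rightarrow> nat \<Rightarrow> real \<Rightarrow> real" where
  "Ccoef j n a = real (n choose j) * ((1 + a) / 2) ^ (n - j) * ((1 - a) / 2) ^ j"

end

theory Submission
  imports Defs "HOL-Probability.Characteristic_Functions"
begin

(* The Gaussian factor exp(-x^2/4) is the characteristic function of a standard normal variable Y
   at x/sqrt 2. Hence, with W = i(z+Y)/sqrt 2, p = (1+a)/2 and q = (1-a)/2, the binomial theorem
   turns the n-th sum into E[(p exp(W/n) + q exp(-W/n))^n]. As p + q = 1 and p - q = a, the
   integrand tends to exp(aW) pointwise; the bound |p exp u + q exp(-u)| <= exp(a|u|) dominates it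
   by exp(a|W|), which is integrable against the Gaussian. By dominated convergence the sums tend
   to E[exp(aW)] = exp(iza/sqrt 2 - a^2/4). *)

lemma norm_exp_minus_one_le: "norm (exp u - 1) \<le> exp (norm u) - 1"
  for u :: "'a::{real_normed_field,banach}"
proof -
  have u: "(\<lambda>n. u ^ Suc n /\<^sub>R fact (Suc n)) sums (exp u - 1)"
    using exp_converges[of u] by (subst sums_Suc_iff) simp
  have norm_u: "(\<lambda>n. norm (u ^ Suc n /\<^sub>R fact (Suc n))) sums (exp (norm u) - 1)"
    using exp_converges[of "norm u"] by (subst sums_Suc_iff) (simp add: norm_power)
  have "norm (exp u - 1) = norm (\<Sum>n. u ^ Suc n /\<^sub>R fact (Suc n))"
    using u by (simp add: sums_iff)
  also have "\<dots> \<le> (\<Sum>n. norm (u ^ Suc n /\<^sub>R fact (Suc n)))"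
    using norm_u by (intro summable_norm) (simp add: sums_iff)
  also have "\<dots> = exp (norm u) - 1"
    using norm_u by (simp add: sums_iff)
  finally show ?thesis .
qed

lemma exp_mult_ge_one_plus_mult_exp_minus_one:
  fixes a r :: real
  assumes "a \<ge> 1"
  shows "1 + a * (exp r - 1) \<le> exp (a * r)"
proof -
  have "exp ((1 - 1 / a) *\<^sub>R 0 + (1 / a) *\<^sub>R (a * r)) \<le> (1 - 1 / a) * exp 0 + (1 / a) * exp (a * r)"
    using assms by (intro convex_onD[OF exp_convex]) auto
  then have "a * (1 + a * exp r) \<le> a * (a + exp (a * r))"
    using assms by (simp add: field_simps)
  then have "1 + a * exp r \<le> a + exp (a * r)"
    using assms by (subst (asm) mult_le_cancel_left_pos) auto
  then show ?thesis
    by (simp add: algebra_simps)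
qed

definition Ccoef_gen :: "real \<Rightarrow> complex \<Rightarrow> complex" where
  "Ccoef_gen a u = of_real ((1 + a) / 2) * exp u + of_real ((1 - a) / 2) * exp (- u)"

lemma Ccoef_gen_power_eq_sum_Ccoef:
  "Ccoef_gen a u ^ n = (\<Sum>j = 0..n. of_real (Ccoef j n a) * exp (of_real (real n - 2 * real j) * u))"
proof -
  have "Ccoef_gen a u ^ n = (of_real ((1 - a) / 2) * exp (- u) + of_real ((1 + a) / 2) * exp u) ^ n"
    by (simp add: Ccoef_gen_def add.commute)
  also have "\<dots> = (\<Sum>j\<le>n. of_nat (n choose j) * (of_real ((1 - a) / 2) * exp (- u)) ^ j
                      * (of_real ((1 + a) / 2) * exp u) ^ (n - j))"
    by (rule binomial_ring)
  also have "\<dots> = (\<Sum>j = 0..n. of_real (Ccoef j n a) * exp (of_real (real n - 2 * real j) * u))"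
    unfolding atLeast0AtMost
  proof (rule sum.cong[OF refl])
    fix j assume "j \<in> {..n}"
    then have "of_real (real n - 2 * real j) * u = of_nat j * (- u) + of_nat (n - j) * u"
      by (simp add: of_nat_diff algebra_simps)
    then have "exp (of_real (real n - 2 * real j) * u) = exp (- u) ^ j * exp u ^ (n - j)"
      by (simp only: exp_add exp_of_nat_mult)
    then show "of_nat (n choose j) * (of_real ((1 - a) / 2) * exp (- u)) ^ j
                 * (of_real ((1 + a) / 2) * exp u) ^ (n - j)
             = of_real (Ccoef j n a) * exp (of_real (real n - 2 * real j) * u)"
      unfolding Ccoef_def of_real_mult of_real_power power_mult_distrib by (simp add: mult_ac)
  qed
  finally show ?thesis .
qed

lemma norm_Ccoef_gen_le:
  assumes "a \<ge> 1"
  shows "norm (Ccoef_gen a u) \<le> exp (a * norm u)"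
proof -
  have tri: "norm (1 + x + y) \<le> 1 + norm x + norm y" for x y :: complex
    using norm_triangle_ineq[of "1 + x" y] norm_triangle_ineq[of 1 x] by simp
  have "Ccoef_gen a u = 1 + of_real ((1 + a) / 2) * (exp u - 1) + of_real ((1 - a) / 2) * (exp (- u) - 1)"
    by (simp add: Ccoef_gen_def algebra_simps add_divide_distrib diff_divide_distrib)
  then have "norm (Ccoef_gen a u)
      \<le> 1 + norm (of_real ((1 + a) / 2) * (exp u - 1)) + norm (of_real ((1 - a) / 2) * (exp (- u) - 1))"
    by (simp only: tri)
  also have "\<dots> = 1 + (1 + a) / 2 * norm (exp u - 1) + (a - 1) / 2 * norm (exp (- u) - 1)"
    using assms unfolding norm_mult norm_of_real by simp
  also have "\<dots> \<le> 1 + (1 + a) / 2 * (exp (norm u) - 1) + (a - 1) / 2 * (exp (norm u) - 1)"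
    using assms norm_exp_minus_one_le[of u] norm_exp_minus_one_le[of "- u"]
    by (intro add_mono mult_left_mono) auto
  also have "\<dots> = 1 + a * (exp (norm u) - 1)"
    by (simp add: field_simps)
  also have "\<dots> \<le> exp (a * norm u)"
    using assms by (rule exp_mult_ge_one_plus_mult_exp_minus_one)
  finally show ?thesis .
qed

lemma norm_Ccoef_gen_power_le:
  assumes "a \<ge> 1"
  shows "norm (Ccoef_gen a (u / of_nat n) ^ n) \<le> exp (a * norm u)"
proof (cases "n = 0")
  case False
  have "norm (Ccoef_gen a (u / of_nat n) ^ n) \<le> exp (a * norm (u / of_nat n)) ^ n"
    unfolding norm_power using assms by (intro power_mono norm_Ccoef_gen_le) auto
  also have "\<dots> = exp (a * norm u)"
    using False by (simp add: exp_of_nat_mult[symmetric] norm_divide)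
  finally show ?thesis .
qed (use assms in simp)

lemma tendsto_power_scaled_exp_deriv:
  fixes F :: "complex \<Rightarrow> complex"
  assumes F0: "F 0 = 1" and F': "(F has_field_derivative c) (at 0)"
  shows "(\<lambda>n. F (w / of_nat n) ^ n) \<longlonglongrightarrow> exp (c * w)"
proof (cases "w = 0")
  case True
  then show ?thesis using F0 by simp
next
  case False
  have "((\<lambda>h. Ln (F h)) has_field_derivative inverse (F 0) * c) (at 0)"
    using F0 has_field_derivative_Ln[of 1] by (intro DERIV_chain2[OF _ F']) simp_all
  then have Ln_quotient: "((\<lambda>h. Ln (F h) / h) \<longlongrightarrow> c) (at 0)"
    using F0 by (simp add: has_field_derivative_iff)
  have to_0: "(\<lambda>n. w / of_nat n) \<longlonglongrightarrow> 0"
    by (rule lim_const_over_n)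
  have "filterlim (\<lambda>n. w / of_nat n) (at 0) sequentially"
    using False eventually_gt_at_top[of "0::nat"]
    by (auto simp: filterlim_at to_0 elim!: eventually_mono)
  from filterlim_compose[OF Ln_quotient this]
  have "(\<lambda>n. w * (Ln (F (w / of_nat n)) / (w / of_nat n))) \<longlonglongrightarrow> w * c"
    by (intro tendsto_mult tendsto_const)
  moreover have "\<forall>\<^sub>F n in sequentially.
      w * (Ln (F (w / of_nat n)) / (w / of_nat n)) = of_nat n * Ln (F (w / of_nat n))"
    using eventually_gt_at_top[of "0::nat"] by eventually_elim (use False in simp)
  ultimately have "(\<lambda>n. exp (of_nat n * Ln (F (w / of_nat n)))) \<longlonglongrightarrow> exp (c * w)"
    by (auto intro!: tendsto_exp simp: mult.commute dest: Lim_transform_eventually)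
  moreover have "(\<lambda>n. F (w / of_nat n)) \<longlonglongrightarrow> F 0"
    using to_0 DERIV_isCont[OF F'] isCont_tendsto_compose by blast
  then have "\<forall>\<^sub>F n in sequentially. F (w / of_nat n) \<noteq> 0"
    using F0 by (intro tendsto_imp_eventually_ne) auto
  then have "\<forall>\<^sub>F n in sequentially. exp (of_nat n * Ln (F (w / of_nat n))) = F (w / of_nat n) ^ n"
    by eventually_elim (simp add: exp_of_nat_mult)
  ultimately show ?thesis
    by (rule Lim_transform_eventually)
qed

lemma Ccoef_gen_power_tendsto: "(\<lambda>n. Ccoef_gen a (u / of_nat n) ^ n) \<longlonglongrightarrow> exp (of_real a * u)"
proof (rule tendsto_power_scaled_exp_deriv)
  show "Ccoef_gen a 0 = 1"
    by (simp add: Ccoef_gen_def field_simps)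
  show "(Ccoef_gen a has_field_derivative of_real a) (at 0)"
    unfolding Ccoef_gen_def by (rule derivative_eq_intros refl)+ (simp add: field_simps)
qed

definition gauss_arg :: "complex \<Rightarrow> real \<Rightarrow> complex" where
  "gauss_arg z y = \<i> * (z + of_real y) / of_real (sqrt 2)"

lemma borel_measurable_std_normal_continuous:
  fixes f :: "real \<Rightarrow> complex"
  assumes "continuous_on UNIV f"
  shows "f \<in> borel_measurable std_normal_distribution"
  using borel_measurable_continuous_onI[OF assms] by simp

lemma exp_mult_gauss_arg:
  "exp (of_real x * gauss_arg z y) = exp (\<i> * z / of_real (sqrt 2) * of_real x) * iexp (x / sqrt 2 * y)"
proof -
  have "of_real x * gauss_arg z y = \<i> * z / of_real (sqrt 2) * of_real x + \<i> * of_real (x / sqrt 2 * y)"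
    by (simp add: gauss_arg_def field_simps)
  then show ?thesis
    by (simp add: exp_add)
qed

lemma integrable_std_normal_exp_gauss_arg:
  "integrable std_normal_distribution (\<lambda>y. exp (of_real x * gauss_arg z y))"
proof -
  interpret real_distribution std_normal_distribution
    by (rule real_dist_normal_dist)
  show ?thesis
    unfolding exp_mult_gauss_arg by (intro integrable_mult_right integrable_iexp) auto
qed

lemma integral_std_normal_exp_gauss_arg:
  "(\<integral>y. exp (of_real x * gauss_arg z y) \<partial>std_normal_distribution)
     = exp (\<i> * z / of_real (sqrt 2) * of_real x - of_real (x^2 / 4))"
proof -
  have "(\<integral>y. exp (of_real x * gauss_arg z y) \<partial>std_normal_distribution)
      = exp (\<i> * z / of_real (sqrt 2) * of_real x) * char std_normal_distribution (x / sqrt 2)"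
    unfolding exp_mult_gauss_arg char_def by simp
  also have "char std_normal_distribution (x / sqrt 2) = of_real (exp (- (x^2 / 4)))"
    by (simp add: char_std_normal_distribution power_divide)
  finally show ?thesis
    by (simp only: exp_diff exp_minus exp_of_real[symmetric] of_real_minus of_real_inverse divide_inverse)
qed

lemma integrable_std_normal_exp_square_quarter:
  "integrable std_normal_distribution (\<lambda>y. exp (y^2 / 4))"
proof -
  have "std_normal_density y * exp (y^2 / 4) = sqrt 2 * normal_density 0 (sqrt 2) y" for y :: real
  proof -
    have "exp (- (y^2) / 2) * exp (y^2 / 4) = exp (- (y^2) / 4)"
      by (simp add: exp_add[symmetric])
    moreover have "sqrt (2 * pi * (sqrt 2)^2) = sqrt 2 * sqrt (2 * pi)"
      by (simp add: real_sqrt_mult[symmetric])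
    ultimately show ?thesis
      by (simp add: normal_density_def)
  qed
  then show ?thesis
    by (subst integrable_density) (simp_all add: normal_density_nonneg)
qed

lemma exp_norm_gauss_arg_le:
  assumes "a \<ge> 0"
  shows "exp (a * norm (gauss_arg z y)) \<le> exp (a * norm z + a^2) * exp (y^2 / 4)"
proof -
  have "norm (gauss_arg z y) = norm (z + of_real y) / sqrt 2"
    by (simp add: gauss_arg_def norm_divide norm_mult)
  also have "\<dots> \<le> norm (z + of_real y)"
    by (simp add: divide_le_eq mult_le_cancel_left1)
  also have "\<dots> \<le> norm z + \<bar>y\<bar>"
    using norm_triangle_ineq[of z "of_real y"] by simp
  finally have "a * norm (gauss_arg z y) \<le> a * norm z + a * \<bar>y\<bar>"
    using assms by (simp add: mult_left_mono flip: distrib_left)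
  also have "a * \<bar>y\<bar> \<le> a^2 + y^2 / 4"
    using zero_le_power2[of "a - \<bar>y\<bar> / 2"] by (simp add: power2_eq_square field_simps)
  finally show ?thesis
    by (simp flip: exp_add)
qed

lemma Ccoef_sum_eq_integral_Ccoef_gen_power:
  assumes "n > 0"
  shows "(\<Sum>j = 0..n. of_real (Ccoef j n a) *
            exp (\<i> * z / of_real (sqrt 2) * of_real (1 - 2 * real j / real n)
                 - of_real ((1 - 2 * real j / real n)^2 / 4)))
       = (\<integral>y. Ccoef_gen a (gauss_arg z y / of_nat n) ^ n \<partial>std_normal_distribution)"
proof -
  have "of_real (real n - 2 * real j) * (u / of_nat n) = of_real (1 - 2 * real j / real n) * u"
    for j and u :: complex
    using assms by (simp add: field_simps)
  then have "(\<integral>y. Ccoef_gen a (gauss_arg z y / of_nat n) ^ n \<partial>std_normal_distribution)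
      = (\<integral>y. (\<Sum>j = 0..n. of_real (Ccoef j n a) *
                exp (of_real (1 - 2 * real j / real n) * gauss_arg z y)) \<partial>std_normal_distribution)"
    by (simp only: Ccoef_gen_power_eq_sum_Ccoef)
  also have "\<dots> = (\<Sum>j = 0..n. \<integral>y. of_real (Ccoef j n a) *
      exp (of_real (1 - 2 * real j / real n) * gauss_arg z y) \<partial>std_normal_distribution)"
    by (intro Bochner_Integration.integral_sum integrable_mult_right integrable_std_normal_exp_gauss_arg)
  also have "\<dots> = (\<Sum>j = 0..n. of_real (Ccoef j n a) *
      (\<integral>y. exp (of_real (1 - 2 * real j / real n) * gauss_arg z y) \<partial>std_normal_distribution))"
    by (simp only: integral_mult_right_zero)
  finally show ?thesis
    by (simp only: integral_std_normal_exp_gauss_arg)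
qed

lemma integral_Ccoef_gen_power_tendsto:
  assumes "a \<ge> 1"
  shows "(\<lambda>n. \<integral>y. Ccoef_gen a (gauss_arg z y / of_nat n) ^ n \<partial>std_normal_distribution)
           \<longlonglongrightarrow> (\<integral>y. exp (of_real a * gauss_arg z y) \<partial>std_normal_distribution)"
proof (rule integral_dominated_convergence[where w = "\<lambda>y. exp (a * norm z + a^2) * exp (y^2 / 4)"])
  show "(\<lambda>y. exp (of_real a * gauss_arg z y)) \<in> borel_measurable std_normal_distribution"
    "(\<lambda>y. Ccoef_gen a (gauss_arg z y / of_nat n) ^ n) \<in> borel_measurable std_normal_distribution" for n
    unfolding Ccoef_gen_def gauss_arg_def
    by (intro borel_measurable_std_normal_continuous continuous_intros) auto
  show "integrable std_normal_distribution (\<lambda>y. exp (a * norm z + a^2) * exp (y^2 / 4))"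
    by (intro integrable_mult_right integrable_std_normal_exp_square_quarter)
  show "AE y in std_normal_distribution.
          (\<lambda>n. Ccoef_gen a (gauss_arg z y / of_nat n) ^ n) \<longlonglongrightarrow> exp (of_real a * gauss_arg z y)"
    by (simp add: Ccoef_gen_power_tendsto)
  show "AE y in std_normal_distribution.
          norm (Ccoef_gen a (gauss_arg z y / of_nat n) ^ n) \<le> exp (a * norm z + a^2) * exp (y^2 / 4)" for n
  proof (rule AE_I2)
    fix y
    have "norm (Ccoef_gen a (gauss_arg z y / of_nat n) ^ n) \<le> exp (a * norm (gauss_arg z y))"
      using assms by (rule norm_Ccoef_gen_power_le)
    also have "\<dots> \<le> exp (a * norm z + a^2) * exp (y^2 / 4)"
      using assms by (intro exp_norm_gauss_arg_le) simp
    finally show "norm (Ccoef_gen a (gauss_arg z y / of_nat n) ^ n) \<le> exp (a * norm z + a^2) * exp (y^2 / 4)" .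
  qed
qed

theorem corollary3p10:
  fixes a :: real and z :: complex
  assumes "a > 1"
  shows "(\<lambda>n. \<Sum>j = 0..n. complex_of_real (Ccoef j n a) *
            exp (\<i> * z / complex_of_real (sqrt 2) * complex_of_real (1 - 2 * real j / real n)
                 - complex_of_real ((1 - 2 * real j / real n)^2 / 4)))
         \<longlonglongrightarrow> exp (\<i> * z * complex_of_real a / complex_of_real (sqrt 2) - complex_of_real (a^2 / 4))"
proof -
  have "(\<lambda>n. \<integral>y. Ccoef_gen a (gauss_arg z y / of_nat n) ^ n \<partial>std_normal_distribution)
          \<longlonglongrightarrow> exp (\<i> * z * complex_of_real a / complex_of_real (sqrt 2) - complex_of_real (a^2 / 4))"
    using integral_Ccoef_gen_power_tendsto[of a z] assms
    unfolding integral_std_normal_exp_gauss_arg by (simp add: mult.commute mult.left_commute)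
  moreover have "\<forall>\<^sub>F n in sequentially.
      (\<integral>y. Ccoef_gen a (gauss_arg z y / of_nat n) ^ n \<partial>std_normal_distribution)
      = (\<Sum>j = 0..n. complex_of_real (Ccoef j n a) *
            exp (\<i> * z / complex_of_real (sqrt 2) * complex_of_real (1 - 2 * real j / real n)
                 - complex_of_real ((1 - 2 * real j / real n)^2 / 4)))"
    using eventually_gt_at_top[of 0] by eventually_elim (simp only: Ccoef_sum_eq_integral_Ccoef_gen_power)
  ultimately show ?thesis
    by (rule Lim_transform_eventually)
qed

end
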